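(* Let $q$ be a prime power, $r\mid(q-1)$ with $r\ge3$, and $q/2\le\ell\le q-1$. The distance $d$ of the quantum Tamo–Barg code $\mathrm{CSS}(C,C)$ with parameters $q,r,\ell$ satisfies \[ d\leq\left(1-\frac{1}{r}\right)(q-\ell)+5. \]
   Context: $[n]=\{0,\dots,n-1\}$, $\mathbb{F}_q^*=\mathbb{F}_q\setminus\{0\}$. For $S\subseteq\mathbb{Z}_{\ge0}$, $\mathbb{F}_q[X]^S=\{\sum_{i\in S}a_iX^i\}$, $\mathrm{ev}(f)=(f(x))_{x\in\mathbb{F}_q^*}$. Let $S=\{i\in[\ell]:i\not\equiv r-1\pmod r\}\cup\{i\in[q-1]:i\equiv1\pmod r\}$, $C=\mathrm{ev}(\mathbb{F}_q[X]^S)\subseteq\mathbb{F}_q^{q-1}$; for $\ell\ge q/2$, $C^\perp\subseteq C$ and the quantum Tamo–Barg code is the CSS code $\mathrm{CSS}(C,C)=\mathrm{span}\{\sum_{y\in C^\perp}|x+y\rangle:x\in C\}$. Its distance is $\min\{|c|:c\in C\setminus C^\perp\}$, where $|c|$ is the Hamming weight (equivalently, the largest $d$ such that every code state can be recovered after erasing any fewer than $d$ qudits). *)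

theory Defs
  imports "HOL-Computational_Algebra.Polynomial"
begin

text \<open>The finite field F_q is a type 'a of class {finite, field}; q = CARD('a).
  Vectors in F_q^{q-1}, indexed by F_q^*, are functions 'a => 'a that vanish at 0.\<close>

definition TB_S :: "nat \<Rightarrow> nat \<Rightarrow> nat \<Rightarrow> nat set" where
  "TB_S q r l = {i. i < l \<and> i mod r \<noteq> r - 1} \<union> {i. i < q - 1 \<and> i mod r = 1 mod r}"

definition ev :: "'a::field poly \<Rightarrow> ('a \<Rightarrow> 'a)" where
  "ev p = (\<lambda>x. if x = 0 then 0 else poly p x)"

definition TB_code :: "'a::{finite,field} itself \<Rightarrow> nat \<Rightarrow> nat \<Rightarrow> ('a \<Rightarrow> 'a) set" where
  "TB_code _ r l = {ev p | p :: 'a poly. \<forall>i. coeff p i \<noteq> 0 \<longrightarrow> i \<in> TB_S (card (UNIV :: 'a set)) r l}"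

definition dual_code :: "('a::{finite,field} \<Rightarrow> 'a) set \<Rightarrow> ('a \<Rightarrow> 'a) set" where
  "dual_code D = {y. y 0 = 0 \<and> (\<forall>c\<in>D. (\<Sum>x\<in>{x. x \<noteq> 0}. c x * y x) = 0)}"

definition hweight :: "('a::{finite,field} \<Rightarrow> 'a) \<Rightarrow> nat" where
  "hweight c = card {x. x \<noteq> 0 \<and> c x \<noteq> 0}"

text \<open>Distance of the quantum Tamo--Barg code CSS(C,C): min weight of C minus its dual.\<close>
definition qTB_distance :: "'a::{finite,field} itself \<Rightarrow> nat \<Rightarrow> nat \<Rightarrow> nat" where
  "qTB_distance T r l = Min (hweight ` (TB_code T r l - dual_code (TB_code T r l)))"

end

theory Submission
  imports Defs "HOL-Library.Cardinality"
begin

(*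
  Write l - 1 = r t + s with s < r and let m = (q - 1)/r.  The r-th power map splits the
  q - 1 units into m fibres of size r.  Pick a set T of t r-th powers, one more power y0, and a
  set D of d = min s (r - 2) points in the fibre over y0.  The polynomial
  A(X) = prod_{y in T} (X^r - y) * prod_{a in D} (X - a) has degree at most r t + d < l and
  only exponents i with i mod r <= d < r - 1, so ev A lies in the code; it vanishes on r t + d
  units.  The exponents r k + 1 with k < m are also allowed, and a polynomial B of degree < m
  takes arbitrary values at the m powers, so adding X B(X^r) with B = 0 on T and at y0 creates
  one further zero in each of the remaining m - t - 1 fibres.  The constant coefficient of the
  result is A(0) <> 0, hence its codeword is not in the dual: pairing with ev 1 sums it over the
  units, which kills every monomial of degree 0 < i < q - 1.  Its weight is therefore at most
  (r - 1)(m - t) - d + 1, and (1 - 1/r) s <= d + 4 gives the bound.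
*)

section \<open>Finite fields\<close>

lemma card_nonzero_field: "card {x::'a::{finite,field}. x \<noteq> 0} = CARD('a) - 1"
proof -
  have "{x::'a. x \<noteq> 0} = UNIV - {0}" by auto
  then show ?thesis by (simp add: card_Diff_singleton)
qed

lemma CARD_field_ge_2: "2 \<le> CARD('a::{finite,field})"
proof -
  have "card {0::'a, 1} \<le> CARD('a)" by (rule card_mono) auto
  then show ?thesis by simp
qed

lemma of_nat_CARD_field: "of_nat CARD('a::{finite,field}) = (0::'a)"
proof -
  have "(\<Sum>x\<in>UNIV. x + 1) = (\<Sum>x\<in>UNIV. x::'a)"
    by (rule sum.reindex_bij_witness[of _ "\<lambda>x. x - 1" "\<lambda>x. x + 1"]) auto
  then show ?thesis by (simp add: sum.distrib)
qed

lemma field_power_CARD_minus_1: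
  fixes x :: "'a::{finite,field}"
  assumes "x \<noteq> 0"
  shows "x ^ (CARD('a) - 1) = 1"
proof -
  let ?U = "{z::'a. z \<noteq> 0}"
  have "(\<Prod>z\<in>?U. x * z) = (\<Prod>z\<in>?U. z)"
    by (rule prod.reindex_bij_witness[of _ "\<lambda>z. z / x" "\<lambda>z. x * z"]) (use assms in auto)
  then have "x ^ card ?U * (\<Prod>z\<in>?U. z) = 1 * (\<Prod>z\<in>?U. z)"
    by (simp add: prod.distrib)
  then show ?thesis by (simp add: card_nonzero_field)
qed

lemma card_power_eq_le:
  fixes c :: "'a::field"
  assumes "0 < k"
  shows "card {x. x ^ k = c} \<le> k"
proof -
  let ?p = "monom 1 k - [:c:]"
  have "coeff ?p k = 1" using assms by (cases k) auto
  then have "?p \<noteq> 0" by (metis coeff_0 one_neq_zero)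
  moreover have "degree ?p \<le> k"
    by (rule order.trans[OF degree_diff_le]) (auto simp: degree_monom_le)
  moreover have "{x. x ^ k = c} = {x. poly ?p x = 0}" by (simp add: poly_monom)
  ultimately show ?thesis using card_poly_roots_bound[of ?p] by simp
qed

lemma sum_nonzero_power_eq_0:
  assumes "0 < i" "i < CARD('a) - 1"
  shows "(\<Sum>x | x \<noteq> 0. x ^ i) = (0::'a::{finite,field})"
proof -
  let ?U = "{z::'a. z \<noteq> 0}"
  obtain a :: 'a where a: "a \<noteq> 0" "a ^ i \<noteq> 1"
  proof (rule ccontr)
    assume "\<not> thesis"
    with that have "?U \<subseteq> {x. x ^ i = 1}" by blast
    then have "card ?U \<le> card {x::'a. x ^ i = 1}" by (intro card_mono) auto
    also have "\<dots> \<le> i" using assms by (intro card_power_eq_le)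
    finally show False using assms by (simp add: card_nonzero_field)
  qed
  have "(\<Sum>z\<in>?U. (a * z) ^ i) = (\<Sum>z\<in>?U. z ^ i)"
    by (rule sum.reindex_bij_witness[of _ "\<lambda>z. z / a" "\<lambda>z. a * z"]) (use a in auto)
  then have "a ^ i * (\<Sum>z\<in>?U. z ^ i) = 1 * (\<Sum>z\<in>?U. z ^ i)"
    by (simp add: power_mult_distrib sum_distrib_left)
  with a show ?thesis by (metis mult_right_cancel)
qed

lemma sum_nonzero_poly:
  fixes p :: "'a::{finite,field} poly"
  assumes "degree p < CARD('a) - 1"
  shows "(\<Sum>x | x \<noteq> 0. poly p x) = - coeff p 0"
proof -
  define n where "n = CARD('a) - 1"
  have "poly p x = (\<Sum>i<n. coeff p i * x ^ i)" for x
    unfolding poly_altdef using assms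
    by (intro sum.mono_neutral_left) (auto simp: n_def coeff_eq_0)
  then have "(\<Sum>x | x \<noteq> 0. poly p x) = (\<Sum>x | x \<noteq> 0. \<Sum>i<n. coeff p i * x ^ i)"
    by simp
  also have "\<dots> = (\<Sum>i<n. coeff p i * (\<Sum>x | x \<noteq> 0. x ^ i))"
    by (simp add: sum_distrib_left sum.swap[of _ "{x::'a. x \<noteq> 0}"])
  also have "\<dots> = (\<Sum>i<n. if i = 0 then coeff p 0 * of_nat n else 0)"
    by (rule sum.cong) (auto simp: sum_nonzero_power_eq_0 card_nonzero_field n_def)
  also have "\<dots> = coeff p 0 * of_nat n" using assms by (simp add: n_def)
  also have "of_nat n = (-1::'a)"
    using of_nat_CARD_field[where 'a='a] CARD_field_ge_2[where 'a='a]
    by (simp add: n_def)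
  finally show ?thesis by simp
qed

section \<open>Fibres of the \<open>r\<close>-th power map\<close>

definition power_fiber :: "nat \<Rightarrow> 'a::field \<Rightarrow> 'a set" where
  "power_fiber r y = {x. x \<noteq> 0 \<and> x ^ r = y}"

definition nonzero_powers :: "nat \<Rightarrow> 'a::field set" where
  "nonzero_powers r = (\<lambda>x. x ^ r) ` {x. x \<noteq> 0}"

lemma zero_notin_nonzero_powers: "(0::'a::field) \<notin> nonzero_powers r"
  by (auto simp: nonzero_powers_def)

lemma power_fiber_not_empty: "y \<in> nonzero_powers r \<Longrightarrow> power_fiber r y \<noteq> {}"
  by (auto simp: nonzero_powers_def power_fiber_def)

lemma card_power_fiber_le:
  fixes y :: "'a::{finite,field}"
  assumes "0 < r"
  shows "card (power_fiber r y) \<le> r"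
proof -
  have "card (power_fiber r y) \<le> card {x. x ^ r = y}"
    by (rule card_mono) (auto simp: power_fiber_def)
  also have "\<dots> \<le> r" using assms by (rule card_power_eq_le)
  finally show ?thesis .
qed

lemma card_eq_sum_card_Int_power_fiber:
  fixes Z :: "'a::{finite,field} set"
  assumes "0 \<notin> Z"
  shows "card Z = (\<Sum>y\<in>nonzero_powers r. card (Z \<inter> power_fiber r y))"
proof -
  have "Z = (\<Union>y\<in>nonzero_powers r. Z \<inter> power_fiber r y)"
  proof (intro equalityI subsetI)
    fix x assume "x \<in> Z"
    with assms have "x \<noteq> 0" by auto
    with \<open>x \<in> Z\<close> show "x \<in> (\<Union>y\<in>nonzero_powers r. Z \<inter> power_fiber r y)"
      by (intro UN_I[of "x ^ r"]) (auto simp: nonzero_powers_def power_fiber_def)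
  qed auto
  also have "card \<dots> = (\<Sum>y\<in>nonzero_powers r. card (Z \<inter> power_fiber r y))"
    by (rule card_UN_disjoint) (auto simp: power_fiber_def)
  finally show ?thesis .
qed

lemma sum_card_power_fiber:
  "(\<Sum>y\<in>nonzero_powers r. card (power_fiber r (y::'a::{finite,field}))) = CARD('a) - 1"
proof -
  have "{x::'a. x \<noteq> 0} \<inter> power_fiber r y = power_fiber r y" for y
    by (auto simp: power_fiber_def)
  then show ?thesis
    using card_eq_sum_card_Int_power_fiber[of "{x::'a. x \<noteq> 0}" r] by (simp add: card_nonzero_field)
qed

lemma card_nonzero_powers_le:
  assumes "CARD('a::{finite,field}) - 1 = r * m" "0 < m"
  shows "card (nonzero_powers r :: 'a set) \<le> m"
proof -
  have "x ^ (r * m) = 1" if "x \<noteq> 0" for x :: 'a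
    using field_power_CARD_minus_1[OF that] assms(1) by simp
  then have "nonzero_powers r \<subseteq> {y::'a. y ^ m = 1}"
    by (auto simp: nonzero_powers_def simp flip: power_mult)
  then have "card (nonzero_powers r :: 'a set) \<le> card {y::'a. y ^ m = 1}"
    by (intro card_mono) auto
  also have "\<dots> \<le> m" using assms(2) by (rule card_power_eq_le)
  finally show ?thesis .
qed

text \<open>Every fibre has at most \<open>r\<close> elements and there are at most \<open>(q - 1)/r\<close> fibres,
  so the partition of the \<open>q - 1\<close> units into fibres forces equality throughout.\<close>

lemma card_nonzero_powers_and_power_fiber:
  fixes r :: nat
  assumes "r dvd CARD('a::{finite,field}) - 1" "0 < r"
  shows "card (nonzero_powers r :: 'a set) = (CARD('a) - 1) div r"
    and "y \<in> nonzero_powers r \<Longrightarrow> card (power_fiber r (y::'a)) = r"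
proof -
  define P where "P = (nonzero_powers r :: 'a set)"
  define m where "m = (CARD('a) - 1) div r"
  have n: "CARD('a) - 1 = r * m" using assms by (simp add: m_def)
  have "0 < m" using n CARD_field_ge_2[where 'a='a] by (cases m) auto
  then have P_le: "card P \<le> m" unfolding P_def using n card_nonzero_powers_le by blast
  have fiber_le: "card (power_fiber r y) \<le> r" for y :: 'a
    using assms(2) by (rule card_power_fiber_le)
  have sum_fibers: "(\<Sum>y\<in>P. card (power_fiber r y)) = r * m"
    using sum_card_power_fiber[of r, where 'a='a] n by (simp add: P_def)
  have "(\<Sum>y\<in>P. r - card (power_fiber r y)) = r * card P - r * m"
    using fiber_le sum_fibers by (simp add: sum_subtractf_nat mult.commute)
  also have "\<dots> = 0" using P_le by simp
  finally have fibers: "\<forall>y\<in>P. card (power_fiber r y) = r"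
    using fiber_le by (simp add: P_def) (meson antisym)
  have "r * m = (\<Sum>y\<in>P. card (power_fiber r y))" using sum_fibers by simp
  also have "\<dots> = r * card P" using fibers by simp
  finally show "card P = m" using assms(2) by simp
  show "y \<in> P \<Longrightarrow> card (power_fiber r y) = r" using fibers by blast
qed

lemma card_zeros_ge_fiberwise:
  fixes f :: "'a::{finite,field} \<Rightarrow> 'a" and r :: nat
  defines "P \<equiv> nonzero_powers r :: 'a set"
  assumes r: "r dvd CARD('a) - 1" "0 < r"
    and T: "T \<subseteq> P" "\<And>y x. y \<in> T \<Longrightarrow> x \<in> power_fiber r y \<Longrightarrow> f x = 0"
    and y0: "y0 \<in> P - T"
    and D: "D \<subseteq> power_fiber r y0" "\<And>x. x \<in> D \<Longrightarrow> f x = 0"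
    and rest: "\<And>y. y \<in> P - T - {y0} \<Longrightarrow> \<exists>x\<in>power_fiber r y. f x = 0"
  shows "r * card T + card D + (card P - card T - 1) \<le> card {x. x \<noteq> 0 \<and> f x = 0}"
proof -
  define Z where "Z = {x. x \<noteq> 0 \<and> f x = 0}"
  define c where "c y = card (Z \<inter> power_fiber r y)" for y
  have fin: "finite P" "finite T" using T(1) finite_subset by auto
  have "card Z = (\<Sum>y\<in>P. c y)"
    unfolding P_def c_def by (rule card_eq_sum_card_Int_power_fiber) (simp add: Z_def)
  also have "\<dots> = (\<Sum>y\<in>T. c y) + c y0 + (\<Sum>y\<in>P - T - {y0}. c y)"
    using fin T(1) y0 by (simp add: sum.subset_diff[of T P] sum.remove[of "P - T" y0])
  finally have card_Z: "card Z = (\<Sum>y\<in>T. c y) + c y0 + (\<Sum>y\<in>P - T - {y0}. c y)" .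
  have "c y = r" if "y \<in> T" for y
  proof -
    have "Z \<inter> power_fiber r y = power_fiber r y"
      using T(2) that by (auto simp: Z_def power_fiber_def)
    then show ?thesis
      using card_nonzero_powers_and_power_fiber(2)[OF r] T(1) that by (auto simp: c_def P_def)
  qed
  then have "(\<Sum>y\<in>T. c y) = r * card T" by simp
  moreover have "card D \<le> c y0"
    unfolding c_def using D by (intro card_mono) (auto simp: Z_def power_fiber_def)
  moreover have "card (P - T - {y0}) \<le> (\<Sum>y\<in>P - T - {y0}. c y)"
  proof -
    have "1 \<le> c y" if "y \<in> P - T - {y0}" for y
      using rest[OF that] by (auto simp: c_def Z_def power_fiber_def Suc_le_eq card_gt_0_iff)
    then show ?thesis using sum_mono[of "P - T - {y0}" "\<lambda>_. 1" c] by simp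
  qed
  moreover have "card (P - T - {y0}) = card P - card T - 1"
    using fin T(1) y0 by (simp add: card_Diff_subset)
  ultimately show ?thesis using card_Z by (simp add: Z_def)
qed

section \<open>Polynomials\<close>

lemma coeff_pcompose_monom_eq_0:
  assumes "\<not> r dvd i"
  shows "coeff (pcompose p (monom 1 r)) i = 0"
  using assms
proof (induction p arbitrary: i rule: pCons_induct)
  case (pCons a p)
  have "i \<noteq> 0" using pCons.prems by (metis dvd_0_right)
  then have "coeff [:a:] i = 0" by (cases i) auto
  moreover have "\<not> r dvd i - r" if "r \<le> i"
    using pCons.prems that by (metis dvd_add_triv_right_iff le_add_diff_inverse2)
  ultimately show ?case
    by (simp add: pcompose_pCons coeff_monom_mult pCons.IH)
qed simp

lemma coeff_pcompose_monom_mult_mod_le: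
  assumes "coeff (pcompose g (monom 1 r) * p) i \<noteq> 0"
  shows "i mod r \<le> degree p"
proof -
  obtain k where k: "k \<le> i" "coeff (pcompose g (monom 1 r)) k * coeff p (i - k) \<noteq> 0"
    using assms unfolding coeff_mult atMost_iff[symmetric]
    by (rule sum.not_neutral_contains_not_neutral)
  have "r dvd k"
    using k(2) coeff_pcompose_monom_eq_0[of r k g] by (metis mult_zero_left)
  then obtain j where "k = r * j" by (rule dvdE)
  with k(1) have "i = (i - k) + r * j" by simp
  then have "i mod r = (i - k) mod r" by (metis mod_mult_self2)
  also have "\<dots> \<le> i - k" by simp
  also have "\<dots> \<le> degree p" using k(2) by (intro le_degree) auto
  finally show ?thesis .
qed

lemma coeff_monom_mult_pcompose_monom_nonzeroD:
  fixes p :: "'a::comm_semiring_1 poly"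
  assumes "coeff (monom 1 k * pcompose p (monom 1 r)) i \<noteq> 0"
  shows "i \<le> r * degree p + k" and "i mod r = k mod r"
proof -
  have "k \<le> i" and nz: "coeff (pcompose p (monom 1 r)) (i - k) \<noteq> 0"
    using assms by (auto simp: coeff_monom_mult split: if_splits)
  have "i - k \<le> degree (pcompose p (monom 1 r))" using nz by (rule le_degree)
  also have "\<dots> \<le> degree p * r"
    using degree_pcompose_le[of p "monom 1 r"] degree_monom_le[of 1 r]
    by (meson le_trans mult_le_mono2)
  finally show "i \<le> r * degree p + k" by (simp add: mult.commute)
  have "r dvd i - k" using nz coeff_pcompose_monom_eq_0 by blast
  then obtain j where "i = k + r * j" using \<open>k \<le> i\<close> by (metis dvdE le_add_diff_inverse)
  then show "i mod r = k mod r" by simp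
qed

lemma interpolating_poly_exists:
  fixes P :: "'a::field set" and v :: "'a \<Rightarrow> 'a"
  assumes "finite P"
  obtains B where "degree B \<le> card P - 1" and "\<And>y. y \<in> P \<Longrightarrow> poly B y = v y"
proof
  define L where "L c = (\<Prod>c'\<in>P - {c}. smult (inverse (c - c')) [:-c', 1:])" for c
  define B where "B = (\<Sum>c\<in>P. smult (v c) (L c))"
  have poly_L: "poly (L c) y = (if y = c then 1 else 0)" if "c \<in> P" "y \<in> P" for c y
  proof (cases "y = c")
    case True
    have "poly (L c) c = (\<Prod>c'\<in>P - {c}. 1)"
      unfolding L_def poly_prod by (intro prod.cong) (auto simp: field_simps)
    with True show ?thesis by simp
  next
    case False
    with that have "y \<in> P - {c}" by simp
    then show ?thesis using False assms by (auto simp: L_def poly_prod)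
  qed
  show "poly B y = v y" if "y \<in> P" for y
  proof -
    have "poly B y = (\<Sum>c\<in>P. if y = c then v c else 0)"
      unfolding B_def poly_sum poly_smult using that poly_L by (intro sum.cong) auto
    also have "\<dots> = v y" using that assms by simp
    finally show ?thesis .
  qed
  have "degree (L c) \<le> card P - 1" if "c \<in> P" for c
  proof -
    have linear: "degree (smult (inverse (c - c')) [:-c', 1:]) \<le> 1" for c'
      by (rule order.trans[OF degree_smult_le]) simp
    have "degree (L c) \<le> (\<Sum>c'\<in>P - {c}. 1)"
      unfolding L_def using assms
      by (intro order.trans[OF degree_prod_sum_le] sum_mono) (simp_all only: finite_Diff o_apply linear)
    then show ?thesis using that assms by simp
  qed
  then show "degree B \<le> card P - 1"
    unfolding B_def by (intro degree_sum_le assms order.trans[OF degree_smult_le])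
qed

lemma interpolate_zero_in_fibers:
  fixes a :: "'a::{finite,field} \<Rightarrow> 'a" and Y :: "'a set"
  assumes "Y \<subseteq> nonzero_powers r"
  obtains B where "degree B \<le> card (nonzero_powers r :: 'a set) - 1"
    and "\<And>y. y \<in> nonzero_powers r - Y \<Longrightarrow> poly B y = 0"
    and "\<And>y. y \<in> Y \<Longrightarrow> \<exists>x\<in>power_fiber r y. a x + x * poly B y = 0"
proof -
  define z where "z y = (SOME x. x \<in> power_fiber r y)" for y :: 'a
  have z: "z y \<in> power_fiber r y" if "y \<in> nonzero_powers r" for y
    unfolding z_def using power_fiber_not_empty[OF that] by (simp add: some_in_eq)
  obtain B where B: "degree B \<le> card (nonzero_powers r :: 'a set) - 1"
    "\<And>y. y \<in> nonzero_powers r \<Longrightarrow> poly B y = (if y \<in> Y then - a (z y) / z y else 0)"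
    by (rule interpolating_poly_exists[of _ "\<lambda>y. if y \<in> Y then - a (z y) / z y else 0"]) auto
  show thesis
  proof (rule that[OF B(1)])
    show "poly B y = 0" if "y \<in> nonzero_powers r - Y" for y using B(2) that by simp
    show "\<exists>x\<in>power_fiber r y. a x + x * poly B y = 0" if "y \<in> Y" for y
    proof
      show "z y \<in> power_fiber r y" using z assms that by blast
      then show "a (z y) + z y * poly B y = 0"
        using B(2)[of y] assms that by (auto simp: power_fiber_def)
    qed
  qed
qed

definition vanishing_poly :: "'a::comm_ring_1 set \<Rightarrow> 'a poly" where
  "vanishing_poly S = (\<Prod>a\<in>S. [:-a, 1:])"

lemma poly_vanishing_poly_eq_0_iff:
  fixes S :: "'a::idom set"
  assumes "finite S"
  shows "poly (vanishing_poly S) x = 0 \<longleftrightarrow> x \<in> S"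
  using assms by (simp add: vanishing_poly_def poly_prod)

lemma degree_vanishing_poly:
  fixes S :: "'a::idom set"
  assumes "finite S"
  shows "degree (vanishing_poly S) = card S"
  using assms by (simp add: vanishing_poly_def degree_prod_eq_sum_degree)

lemma coeff_pcompose_vanishing_poly_mult_nonzeroD:
  fixes T D :: "'a::idom set"
  assumes "finite T" "finite D"
    and "coeff (pcompose (vanishing_poly T) (monom 1 r) * vanishing_poly D) i \<noteq> 0"
  shows "i \<le> r * card T + card D" and "i mod r \<le> card D"
proof -
  have "i \<le> degree (pcompose (vanishing_poly T) (monom 1 r) * vanishing_poly D)"
    using assms(3) by (rule le_degree)
  also have "\<dots> \<le> degree (vanishing_poly T) * degree (monom (1::'a) r) + degree (vanishing_poly D)"
    by (intro order.trans[OF degree_mult_le] add_right_mono degree_pcompose_le)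
  finally show "i \<le> r * card T + card D"
    using assms(1,2) by (simp add: degree_vanishing_poly degree_monom_eq mult.commute)
  show "i mod r \<le> card D"
    using coeff_pcompose_monom_mult_mod_le[OF assms(3)] assms(2) by (simp add: degree_vanishing_poly)
qed

lemma coeff_TB_construction_in_TB_S:
  fixes T D :: "'a::idom set" and B :: "'a poly"
  assumes "2 \<le> r" "finite T" "finite D" "card D \<le> r - 2" "r * card T + card D < l"
    and "q - 1 = r * m" "degree B < m"
    and "coeff (pcompose (vanishing_poly T) (monom 1 r) * vanishing_poly D
                + monom 1 1 * pcompose B (monom 1 r)) i \<noteq> 0"
  shows "i \<in> TB_S q r l"
proof -
  consider "coeff (pcompose (vanishing_poly T) (monom 1 r) * vanishing_poly D) i \<noteq> 0"
    | "coeff (monom 1 1 * pcompose B (monom 1 r)) i \<noteq> 0"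
    using assms(8) unfolding coeff_add by (metis add.left_neutral)
  then show ?thesis
  proof cases
    case 1
    then have "i \<le> r * card T + card D" "i mod r \<le> card D"
      using coeff_pcompose_vanishing_poly_mult_nonzeroD[OF assms(2,3)] by blast+
    then show ?thesis using assms(1,4,5) by (auto simp: TB_S_def)
  next
    case 2
    then have "i \<le> r * degree B + 1" "i mod r = 1 mod r"
      by (rule coeff_monom_mult_pcompose_monom_nonzeroD)+
    moreover have "r * degree B + r \<le> r * m"
      using assms(7) mult_le_mono2[of "degree B + 1" m r] by simp
    ultimately show ?thesis using assms(1,6) by (simp add: TB_S_def)
  qed
qed

section \<open>The quantum Tamo--Barg code\<close>

lemma ev_in_TB_code:
  fixes p :: "'a::{finite,field} poly"
  assumes "\<And>i. coeff p i \<noteq> 0 \<Longrightarrow> i \<in> TB_S CARD('a) r l"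
  shows "ev p \<in> TB_code TYPE('a) r l"
  using assms unfolding TB_code_def by blast

lemma ev_notin_dual_TB_code:
  fixes p :: "'a::{finite,field} poly"
  assumes "0 \<in> TB_S CARD('a) r l" "degree p < CARD('a) - 1" "coeff p 0 \<noteq> 0"
  shows "ev p \<notin> dual_code (TB_code TYPE('a) r l)"
proof
  assume dual: "ev p \<in> dual_code (TB_code TYPE('a) r l)"
  have "ev 1 \<in> TB_code TYPE('a) r l"
    using assms(1) by (intro ev_in_TB_code) (simp add: coeff_1)
  with dual have "(\<Sum>x | x \<noteq> 0. ev 1 x * ev p x) = 0"
    unfolding dual_code_def by blast
  moreover have "(\<Sum>x | x \<noteq> 0. ev 1 x * ev p x) = (\<Sum>x | x \<noteq> 0. poly p x)"
    by (rule sum.cong) (auto simp: ev_def)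
  ultimately show False
    using sum_nonzero_poly[OF assms(2)] assms(3) by simp
qed

lemma hweight_add_card_zeros:
  fixes c :: "'a::{finite,field} \<Rightarrow> 'a"
  shows "hweight c + card {x. x \<noteq> 0 \<and> c x = 0} = CARD('a) - 1"
proof -
  have "{x::'a. x \<noteq> 0} = {x. x \<noteq> 0 \<and> c x \<noteq> 0} \<union> {x. x \<noteq> 0 \<and> c x = 0}" by auto
  then have "card {x::'a. x \<noteq> 0} = hweight c + card {x. x \<noteq> 0 \<and> c x = 0}"
    unfolding hweight_def by (simp add: card_Un_disjoint disjoint_iff)
  then show ?thesis by (simp add: card_nonzero_field)
qed

lemma qTB_distance_add_card_zeros_le:
  fixes p :: "'a::{finite,field} poly"
  assumes "2 \<le> r" "0 < l" "l \<le> CARD('a) - 1"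
    and "\<And>i. coeff p i \<noteq> 0 \<Longrightarrow> i \<in> TB_S CARD('a) r l" and "coeff p 0 \<noteq> 0"
  shows "qTB_distance TYPE('a) r l + card {x. x \<noteq> 0 \<and> poly p x = 0} \<le> CARD('a) - 1"
proof -
  have "0 \<in> TB_S CARD('a) r l" using assms(1,2) by (simp add: TB_S_def)
  moreover have "degree p < CARD('a) - 1"
  proof -
    have "p \<noteq> 0" using assms(5) by auto
    then have "degree p \<in> TB_S CARD('a) r l" by (intro assms(4)) simp
    then show ?thesis using assms(3) by (auto simp: TB_S_def)
  qed
  ultimately have "ev p \<notin> dual_code (TB_code TYPE('a) r l)"
    using assms(5) by (rule ev_notin_dual_TB_code)
  moreover have "ev p \<in> TB_code TYPE('a) r l" using assms(4) by (rule ev_in_TB_code)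
  ultimately have "qTB_distance TYPE('a) r l \<le> hweight (ev p)"
    unfolding qTB_distance_def by (intro Min_le) auto
  moreover have "{x. x \<noteq> 0 \<and> poly p x = 0} = {x. x \<noteq> 0 \<and> ev p x = 0}"
    by (auto simp: ev_def)
  ultimately show ?thesis using hweight_add_card_zeros[of "ev p"] by simp
qed

lemma TB_poly_vanishing_on_fibers:
  fixes r l :: nat and T D :: "'a::{finite,field} set"
  defines "P \<equiv> nonzero_powers r :: 'a set"
  assumes r: "r dvd CARD('a) - 1" "2 \<le> r"
    and T: "T \<subseteq> P" and y0: "y0 \<in> P - T"
    and D: "D \<subseteq> power_fiber r y0" "card D \<le> r - 2" and l: "r * card T + card D < l"
  obtains F :: "'a poly" where
    "\<And>i. coeff F i \<noteq> 0 \<Longrightarrow> i \<in> TB_S CARD('a) r l"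
    and "coeff F 0 \<noteq> 0"
    and "r * card T + card D + (card P - card T - 1) \<le> card {x. x \<noteq> 0 \<and> poly F x = 0}"
proof -
  define m where "m = (CARD('a) - 1) div r"
  have n: "CARD('a) - 1 = r * m" using r(1) by (simp add: m_def)
  have "card P = m" using card_nonzero_powers_and_power_fiber(1)[OF r(1)] r(2) by (simp add: P_def m_def)
  with y0 have "0 < m" by (auto simp: card_gt_0_iff)
  have fin: "finite T" "finite D" using T D(1) finite_subset by auto
  define A where "A = pcompose (vanishing_poly T) (monom 1 r) * vanishing_poly D"
  have poly_A: "poly A x = poly (vanishing_poly T) (x ^ r) * poly (vanishing_poly D) x" for x
    by (simp add: A_def poly_pcompose poly_monom)
  obtain B where B: "degree B \<le> m - 1" "\<And>y. y \<in> P - (P - T - {y0}) \<Longrightarrow> poly B y = 0"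
    "\<And>y. y \<in> P - T - {y0} \<Longrightarrow> \<exists>x\<in>power_fiber r y. poly A x + x * poly B y = 0"
    using interpolate_zero_in_fibers[of "P - T - {y0}" r "poly A"] \<open>card P = m\<close>
    by (auto simp: P_def)
  define F where "F = A + monom 1 1 * pcompose B (monom 1 r)"
  have poly_F: "poly F x = poly A x + x * poly B (x ^ r)" for x
    by (simp add: F_def poly_pcompose poly_monom)
  show thesis
  proof
    show "i \<in> TB_S CARD('a) r l" if "coeff F i \<noteq> 0" for i
      using that r(2) fin D(2) l n B(1) \<open>0 < m\<close> unfolding F_def A_def
      by (intro coeff_TB_construction_in_TB_S) auto
  next
    have "0 \<notin> T" "0 \<notin> D"
      using T D zero_notin_nonzero_powers[of r] by (auto simp: P_def power_fiber_def)
    then have "poly F 0 \<noteq> 0"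
      using fin r(2) by (simp add: poly_F poly_A poly_vanishing_poly_eq_0_iff zero_power)
    then show "coeff F 0 \<noteq> 0" by (simp add: poly_0_coeff_0)
  next
    show "r * card T + card D + (card P - card T - 1) \<le> card {x. x \<noteq> 0 \<and> poly F x = 0}"
      unfolding P_def
    proof (rule card_zeros_ge_fiberwise[OF r(1)])
      show "poly F x = 0" if "y \<in> T" "x \<in> power_fiber r y" for y x
        using that fin B(2)[of y] T
        by (auto simp: poly_F poly_A poly_vanishing_poly_eq_0_iff power_fiber_def)
      show "poly F x = 0" if "x \<in> D" for x
        using that fin D y0 B(2)[of y0]
        by (auto simp: poly_F poly_A poly_vanishing_poly_eq_0_iff power_fiber_def)
      show "\<exists>x\<in>power_fiber r y. poly F x = 0" if "y \<in> nonzero_powers r - T - {y0}" for y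
        using that B(3)[of y] by (auto simp: P_def poly_F power_fiber_def)
    qed (use r(2) T y0 D in \<open>auto simp: P_def\<close>)
  qed
qed

lemma TB_poly_with_many_zeros:
  fixes r l t s :: nat
  assumes r: "r dvd CARD('a) - 1" "2 \<le> r"
    and l: "l = r * t + s + 1" "l \<le> CARD('a) - 1" and s: "s < r"
  obtains F :: "'a::{finite,field} poly" where
    "\<And>i. coeff F i \<noteq> 0 \<Longrightarrow> i \<in> TB_S CARD('a) r l"
    and "coeff F 0 \<noteq> 0"
    and "r * t + min s (r - 2) + ((CARD('a) - 1) div r - t - 1)
           \<le> card {x. x \<noteq> 0 \<and> poly F x = 0}"
proof -
  define P where "P = (nonzero_powers r :: 'a set)"
  define m where "m = (CARD('a) - 1) div r"
  define d where "d = min s (r - 2)"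
  have card_P: "card P = m" and card_fiber: "\<And>y. y \<in> P \<Longrightarrow> card (power_fiber r y) = r"
    using card_nonzero_powers_and_power_fiber[OF r(1)] r(2) by (simp_all add: P_def m_def)
  have "r * t < r * m" using l r(1) by (simp add: m_def)
  then have "t < m" by simp
  then obtain T where T: "T \<subseteq> P" "card T = t"
    using obtain_subset_with_card_n[of t P] card_P by auto
  then have "card (P - T) = m - t" using card_P by (simp add: card_Diff_subset)
  then have "P - T \<noteq> {}" using \<open>t < m\<close> by (intro notI) simp
  then obtain y0 where y0: "y0 \<in> P - T" by blast
  then have "d \<le> card (power_fiber r y0)" using card_fiber by (simp add: d_def)
  then obtain D where D: "D \<subseteq> power_fiber r y0" "card D = d"
    by (rule obtain_subset_with_card_n)
  have "card D \<le> r - 2" "r * card T + card D < l" using T D l(1) by (auto simp: d_def)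
  with T y0 D show thesis
    unfolding P_def
  proof (elim TB_poly_vanishing_on_fibers[OF r])
    fix F :: "'a poly"
    assume "\<And>i. coeff F i \<noteq> 0 \<Longrightarrow> i \<in> TB_S CARD('a) r l" "coeff F 0 \<noteq> 0"
      "r * card T + card D + (card (nonzero_powers r :: 'a set) - card T - 1)
         \<le> card {x. x \<noteq> 0 \<and> poly F x = 0}"
    with T D card_P show thesis by (intro that) (auto simp: P_def d_def m_def)
  qed
qed


lemma TB_distance_arith:
  fixes w r m t s :: nat
  assumes "0 < r" "s < r" "t < m" and w: "w + r * t + min s (r - 2) + (m - t - 1) \<le> r * m"
  shows "real w \<le> (1 - 1 / real r) * (real (r * m + 1) - real (r * t + s + 1)) + 5"
proof -
  define d where "d = min s (r - 2)"
  have "(r - 1) * s \<le> r * (d + 4)"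
  proof (cases "s \<le> r - 2")
    case True
    have "(r - 1) * s \<le> r * (s + 4)" by (intro mult_le_mono) auto
    with True show ?thesis by (simp add: d_def)
  next
    case False
    with assms(2) have "s = r - 1" "d = r - 2" by (auto simp: d_def)
    have "(r - 1) * (r - 1) \<le> r * (r - 2 + 4)" by (intro mult_le_mono) auto
    with \<open>s = r - 1\<close> \<open>d = r - 2\<close> show ?thesis by simp
  qed
  then have "real (r - 1) * real s \<le> real r * (real d + 4)"
    by (metis of_nat_add of_nat_le_iff of_nat_mult of_nat_numeral)
  then have "(real r - 1) * real s / real r \<le> real d + 4"
    using assms(1) by (simp add: of_nat_diff pos_divide_le_eq mult.commute)
  moreover have "real w + real r * real t + real d + (real m - real t - 1) \<le> real r * real m"
  proof -
    have "real (w + r * t + d + (m - t - 1)) \<le> real (r * m)" using w unfolding d_def by linarith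
    then show ?thesis using assms(3) by (simp add: of_nat_diff)
  qed
  moreover have "(1 - 1 / real r) * (real (r * m + 1) - real (r * t + s + 1))
      = real r * real m - real r * real t - real m + real t - (real r - 1) * real s / real r"
    using assms(1) by (simp add: field_simps)
  ultimately show ?thesis by linarith
qed
theorem corollary6p1:
  fixes r l :: nat
  assumes "r dvd card (UNIV :: 'a::{finite,field} set) - 1"
    and "r \<ge> 3"
    and "real (card (UNIV :: 'a set)) / 2 \<le> real l"
    and "l \<le> card (UNIV :: 'a set) - 1"
  shows "real (qTB_distance TYPE('a) r l)
           \<le> (1 - 1 / real r) * (real (card (UNIV :: 'a set)) - real l) + 5"
proof -
  define m where "m = (CARD('a) - 1) div r"
  define t where "t = (l - 1) div r"
  define s where "s = (l - 1) mod r"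
  have q: "CARD('a) = r * m + 1"
    using assms(1) CARD_field_ge_2[where 'a='a] by (simp add: m_def)
  have "0 < l" using assms(3) CARD_field_ge_2[where 'a='a] by linarith
  then have l: "l = r * t + s + 1" by (simp add: t_def s_def)
  have "s < r" using assms(2) by (simp add: s_def)
  have "r * t < r * m" using l q assms(4) by linarith
  then have "t < m" by simp
  obtain F :: "'a poly"
    where F: "\<And>i. coeff F i \<noteq> 0 \<Longrightarrow> i \<in> TB_S CARD('a) r l" "coeff F 0 \<noteq> 0"
      "r * t + min s (r - 2) + (m - t - 1) \<le> card {x. x \<noteq> 0 \<and> poly F x = 0}"
    using TB_poly_with_many_zeros[OF assms(1) _ l assms(4) \<open>s < r\<close>] assms(2)
    by (auto simp: m_def)
  have "qTB_distance TYPE('a) r l + card {x. x \<noteq> 0 \<and> poly F x = 0} \<le> CARD('a) - 1"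
    using assms(2,4) \<open>0 < l\<close> F(1,2) by (intro qTB_distance_add_card_zeros_le) auto
  with F(3) q have "qTB_distance TYPE('a) r l + r * t + min s (r - 2) + (m - t - 1) \<le> r * m"
    by linarith
  then show ?thesis
    using TB_distance_arith[OF _ \<open>s < r\<close> \<open>t < m\<close>] assms(2) q l by simp
qed

end
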